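(* Let $X,Y$ be Hilbert spaces, $U:=X\times Y$, $K\in\mathcal{L}(X;Y)$, and let $\partial G:X\rightrightarrows X$ and $\partial F^*:Y\rightrightarrows Y$ be set-valued maps. Define $H:U\rightrightarrows U$ by $H(x,y):=\big(\partial G(x)+K^*y\big)\times\big(\partial F^*(y)-Kx\big)$. Fix $i\in\mathbb{N}$, $\tau_i,\sigma_{i+1},\phi_i,\psi_{i+1}>0$, $\gamma,\rho\ge0$, and set \[ W_{i+1}:=\begin{pmatrix}\tau_iI&0\\0&\sigma_{i+1}I\end{pmatrix},\quad Z_{i+1}:=\begin{pmatrix}\phi_iI&0\\0&\psi_{i+1}I\end{pmatrix},\quad \Xi_{i+1}:=\begin{pmatrix}\gamma\tau_iI&2\tau_iK^*\\-2\sigma_{i+1}K&\rho\sigma_{i+1}I\end{pmatrix}. \] Let $Z_{i+2},M_{i+2}\in\mathcal{L}(U;U)$ with $Z_{i+2}M_{i+2}$ self-adjoint and positive semidefinite. Let $\hat u\in H^{-1}(0)$ and suppose there is a neighbourhood $\mathcal{U}$ of $\hat u$ such that for all $u=(x,y)\in\mathcal{U}$, $q\in\partial G(x)$, $z\in\partial F^*(y)$, \[ \inf_{(x^*,y^* )\in H^{-1}(0)}\Big[\langle q+K^*y^*,x-x^*\rangle-\tfrac{\gamma}{2}\|x-x^*\|^2\Big]\ge0,\qquad \inf_{(x^*,y^* )\in H^{-1}(0)}\Big[\langle z-Kx^*,y-y^*\rangle-\tfrac{\rho}{2}\|y-y^*\|^2\Big]\ge0. \] Then $H$ is $(Z_{i+1}\Xi_{i+1},2Z_{i+1}W_{i+1},Z_{i+2}M_{i+2})$-partially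 strongly submonotone at $(\hat u,0)$.
   Context: For $T\in\mathcal{L}(U;U)$: $\langle x,z\rangle_T:=\langle Tx,z\rangle$, $\|x\|^2_T:=\langle Tx,x\rangle$, $\operatorname{dist}^2_T(z,A):=\inf_{u\in A}\|z-u\|^2_T$. For $\Xi,N,M\in\mathcal{L}(U;U)$ with $M\ge0$, a map $T:U\rightrightarrows U$ is $(\Xi,N,M)$-partially strongly submonotone at $(\hat u,\hat w)\in\operatorname{graph}T$ if there is a neighbourhood $\mathcal{U}\ni\hat u$ such that $\inf_{u^*\in T^{-1}(\hat w)}(\langle w-\hat w,u-u^*\rangle_N+\|u-u^*\|^2_{M-\Xi})\ge\operatorname{dist}^2_M(u,T^{-1}(\hat w))$ for all $u\in\mathcal{U}$, $w\in T(u)$. Note that for $(x^*,y^* )\in H^{-1}(0)$ one has $-K^*y^*\in\partial G(x^* )$ and $Kx^*\in\partial F^*(y^* )$. *)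

theory Defs
  imports "HOL-Analysis.Analysis"
begin

definition winner :: "('u::real_inner \<Rightarrow> 'u) \<Rightarrow> 'u \<Rightarrow> 'u \<Rightarrow> real" where
  "winner T x z = inner (T x) z"

definition wnorm2 :: "('u::real_inner \<Rightarrow> 'u) \<Rightarrow> 'u \<Rightarrow> real" where
  "wnorm2 T x = inner (T x) x"

text \<open>Infimum taken in the extended reals (so it is always well defined).\<close>
definition wdist2 :: "('u::real_inner \<Rightarrow> 'u) \<Rightarrow> 'u \<Rightarrow> 'u set \<Rightarrow> ereal" where
  "wdist2 T z A = (INF u\<in>A. ereal (wnorm2 T (z - u)))"

definition psd_op :: "('u::real_inner \<Rightarrow> 'u) \<Rightarrow> bool" where
  "psd_op M \<longleftrightarrow> (\<forall>u. inner (M u) u \<ge> 0)"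

definition selfadjoint_op :: "('u::real_inner \<Rightarrow> 'u) \<Rightarrow> bool" where
  "selfadjoint_op M \<longleftrightarrow> (\<forall>u v. inner (M u) v = inner u (M v))"

definition partially_strongly_submonotone ::
  "('u::real_inner \<Rightarrow> 'u) \<Rightarrow> ('u \<Rightarrow> 'u) \<Rightarrow> ('u \<Rightarrow> 'u) \<Rightarrow> ('u \<Rightarrow> 'u set) \<Rightarrow> 'u \<Rightarrow> 'u \<Rightarrow> bool" where
  "partially_strongly_submonotone Xi N M T uh wh \<longleftrightarrow>
     bounded_linear Xi \<and> bounded_linear N \<and> bounded_linear M \<and> psd_op M \<and>
     wh \<in> T uh \<and>
     (\<exists>V. open V \<and> uh \<in> V \<and>
        (\<forall>u\<in>V. \<forall>w\<in>T u.
           (INF us\<in>{v. wh \<in> T v}. ereal (winner N (w - wh) (u - us) + wnorm2 (\<lambda>v. M v - Xi v) (u - us)))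
             \<ge> wdist2 M u {v. wh \<in> T v}))"

definition Hop :: "('a::real_inner \<Rightarrow> 'a set) \<Rightarrow> ('b::real_inner \<Rightarrow> 'b set) \<Rightarrow> ('a \<Rightarrow> 'b) \<Rightarrow> ('b \<Rightarrow> 'a)
                   \<Rightarrow> 'a \<times> 'b \<Rightarrow> ('a \<times> 'b) set" where
  "Hop dG dFs K Ks = (\<lambda>(x, y). {(q + Ks y, z - K x) | q z. q \<in> dG x \<and> z \<in> dFs y})"

definition diag_op :: "real \<Rightarrow> real \<Rightarrow> 'a::real_vector \<times> 'b::real_vector \<Rightarrow> 'a \<times> 'b" where
  "diag_op a b = (\<lambda>(x, y). (a *\<^sub>R x, b *\<^sub>R y))"

definition Xi_op :: "real \<Rightarrow> real \<Rightarrow> real \<Rightarrow> real \<Rightarrow> ('a::real_vector \<Rightarrow> 'b::real_vector) \<Rightarrow> ('b \<Rightarrow> 'a)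
                     \<Rightarrow> 'a \<times> 'b \<Rightarrow> 'a \<times> 'b" where
  "Xi_op \<gamma> \<rho> \<tau> \<sigma> K Ks = (\<lambda>(x, y). ((\<gamma> * \<tau>) *\<^sub>R x + (2 * \<tau>) *\<^sub>R Ks y,
                                    - (2 * \<sigma>) *\<^sub>R K x + (\<rho> * \<sigma>) *\<^sub>R y))"

end

theory Submission
  imports Defs
begin

text \<open>For \<open>u = (x, y)\<close>, \<open>w \<in> H u\<close> and a zero \<open>u\<^sup>* = (x\<^sup>*, y\<^sup>*)\<close> of \<open>H\<close>, expanding
  \<open>\<langle>w, u - u\<^sup>*\<rangle>\<^bsub>2ZW\<^esub> - \<parallel>u - u\<^sup>*\<parallel>\<^sup>2\<^bsub>Z\<Xi>\<^esub>\<close> makes the coupling terms in \<open>K\<close> and \<open>K\<^sup>*\<close> cancel, leaving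
  \<open>2\<phi>\<tau>\<close> times the primal gap plus \<open>2\<psi>\<sigma>\<close> times the dual gap, both nonnegative by hypothesis
  for \<open>u\<close> near the base point. Hence \<open>\<parallel>u - u\<^sup>*\<parallel>\<^sup>2\<^bsub>M\<^esub>\<close> is bounded by the submonotonicity expression for every zero \<open>u\<^sup>*\<close>,
  and taking infima gives the claim.\<close>

lemma adjoint_bounded_linear:
  fixes K :: "'a::real_inner \<Rightarrow> 'b::real_inner"
  assumes K: "bounded_linear K" and Ks: "\<And>x y. inner (K x) y = inner x (Ks y)"
  shows "bounded_linear Ks"
proof
  show "Ks (a + b) = Ks a + Ks b" for a b
    by (metis Ks inner_add_right vector_eq_ldot)
  show "Ks (c *\<^sub>R a) = c *\<^sub>R Ks a" for c a
    by (metis Ks inner_scaleR_right vector_eq_ldot)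
  obtain B where B: "\<And>x. norm (K x) \<le> norm x * B" "B \<ge> 0"
    using bounded_linear.nonneg_bounded[OF K] by blast
  show "\<exists>B. \<forall>y. norm (Ks y) \<le> norm y * B"
  proof (intro exI allI)
    fix y
    have "norm (Ks y) * norm (Ks y) = inner (K (Ks y)) y"
      by (simp add: Ks flip: power2_eq_square power2_norm_eq_inner)
    also have "\<dots> \<le> norm (K (Ks y)) * norm y" by (rule norm_cauchy_schwarz)
    also have "\<dots> \<le> norm (Ks y) * (norm y * B)"
      using mult_right_mono[OF B(1)[of "Ks y"] norm_ge_zero[of y]] by (simp add: mult_ac)
    finally show "norm (Ks y) \<le> norm y * B"
      using B(2) by (cases "Ks y = 0") (simp_all add: mult_le_cancel_left)
  qed
qed

lemma bounded_linear_diag_op: "bounded_linear (diag_op a b)"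
  unfolding diag_op_def case_prod_beta
  by (intro bounded_linear_Pair bounded_linear_const_scaleR bounded_linear_fst bounded_linear_snd)

lemma bounded_linear_Xi_op:
  assumes "bounded_linear K" "bounded_linear Ks"
  shows "bounded_linear (Xi_op \<gamma> \<rho> \<tau> \<sigma> K Ks)"
  unfolding Xi_op_def case_prod_beta
  by (intro bounded_linear_Pair bounded_linear_add bounded_linear_minus bounded_linear_const_scaleR
      bounded_linear_compose[OF assms(1)] bounded_linear_compose[OF assms(2)]
      bounded_linear_fst bounded_linear_snd)

lemma partially_strongly_submonotoneI:
  assumes "bounded_linear Xi" "bounded_linear N" "bounded_linear M" "psd_op M"
    and "wh \<in> T uh" and "open V" "uh \<in> V"
    and gap: "\<And>u w us. u \<in> V \<Longrightarrow> w \<in> T u \<Longrightarrow> wh \<in> T us \<Longrightarrow>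
      inner (Xi (u - us)) (u - us) \<le> winner N (w - wh) (u - us)"
  shows "partially_strongly_submonotone Xi N M T uh wh"
  unfolding partially_strongly_submonotone_def wdist2_def
proof (intro conjI exI[of _ V] ballI assms)
  fix u w assume "u \<in> V" "w \<in> T u"
  then have "wnorm2 M (u - us) \<le> winner N (w - wh) (u - us) + wnorm2 (\<lambda>v. M v - Xi v) (u - us)"
    if "us \<in> {v. wh \<in> T v}" for us
    using gap that by (simp add: wnorm2_def inner_diff_left)
  then show "(INF us\<in>{v. wh \<in> T v}. ereal (wnorm2 M (u - us)))
      \<le> (INF us\<in>{v. wh \<in> T v}. ereal (winner N (w - wh) (u - us) + wnorm2 (\<lambda>v. M v - Xi v) (u - us)))"
    by (intro INF_mono) auto
qed

lemma saddle_gap_eq: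
  assumes "linear K" "linear Ks"
  shows "winner (\<lambda>u. 2 *\<^sub>R diag_op \<phi> \<psi> (diag_op \<tau> \<sigma> u)) (q + Ks y, z - K x) (x - xs, y - ys)
      - inner ((diag_op \<phi> \<psi> \<circ> Xi_op \<gamma> \<rho> \<tau> \<sigma> K Ks) (x - xs, y - ys)) (x - xs, y - ys)
    = 2 * \<phi> * \<tau> * (inner (q + Ks ys) (x - xs) - \<gamma> / 2 * (norm (x - xs))\<^sup>2)
      + 2 * \<psi> * \<sigma> * (inner (z - K xs) (y - ys) - \<rho> / 2 * (norm (y - ys))\<^sup>2)"
proof -
  interpret K: linear K by fact
  interpret Ks: linear Ks by fact
  show ?thesis
    by (simp add: winner_def diag_op_def Xi_op_def K.diff Ks.diff power2_norm_eq_inner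
        inner_add_left inner_diff_left algebra_simps)
qed

theorem proposition6p1:
  fixes K :: "'a::{real_inner, complete_space} \<Rightarrow> 'b::{real_inner, complete_space}"
    and Ks :: "'b \<Rightarrow> 'a"
    and dG :: "'a \<Rightarrow> 'a set" and dFs :: "'b \<Rightarrow> 'b set"
    and \<tau> \<sigma> \<phi> \<psi> \<gamma> \<rho> :: real
    and Z2 M2 :: "'a \<times> 'b \<Rightarrow> 'a \<times> 'b"
    and uh :: "'a \<times> 'b"
  assumes K: "bounded_linear K"
    and Ks: "\<And>x y. inner (K x) y = inner x (Ks y)"
    and pos: "\<tau> > 0" "\<sigma> > 0" "\<phi> > 0" "\<psi> > 0"
    and nonneg: "\<gamma> \<ge> 0" "\<rho> \<ge> 0"
    and Z2: "bounded_linear Z2" and M2: "bounded_linear M2"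
    and ZM_sa: "selfadjoint_op (Z2 \<circ> M2)" and ZM_psd: "psd_op (Z2 \<circ> M2)"
    and uh: "0 \<in> Hop dG dFs K Ks uh"
    and nbhd: "\<exists>V. open V \<and> uh \<in> V \<and>
      (\<forall>x y. (x, y) \<in> V \<longrightarrow>
        (\<forall>q\<in>dG x. (INF p\<in>{p. 0 \<in> Hop dG dFs K Ks p}.
              ereal (inner (q + Ks (snd p)) (x - fst p) - \<gamma> / 2 * (norm (x - fst p))\<^sup>2)) \<ge> 0) \<and>
        (\<forall>z\<in>dFs y. (INF p\<in>{p. 0 \<in> Hop dG dFs K Ks p}.
              ereal (inner (z - K (fst p)) (y - snd p) - \<rho> / 2 * (norm (y - snd p))\<^sup>2)) \<ge> 0))"
  shows "partially_strongly_submonotone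
           (diag_op \<phi> \<psi> \<circ> Xi_op \<gamma> \<rho> \<tau> \<sigma> K Ks)
           (\<lambda>u. 2 *\<^sub>R diag_op \<phi> \<psi> (diag_op \<tau> \<sigma> u))
           (Z2 \<circ> M2)
           (Hop dG dFs K Ks) uh 0"
proof -
  have Ks_bl: "bounded_linear Ks" using K Ks by (rule adjoint_bounded_linear)
  obtain V where V: "open V" "uh \<in> V" and V_gap: "\<And>x y. (x, y) \<in> V \<Longrightarrow>
      (\<forall>q\<in>dG x. \<forall>p. 0 \<in> Hop dG dFs K Ks p \<longrightarrow>
         0 \<le> inner (q + Ks (snd p)) (x - fst p) - \<gamma> / 2 * (norm (x - fst p))\<^sup>2) \<and>
      (\<forall>z\<in>dFs y. \<forall>p. 0 \<in> Hop dG dFs K Ks p \<longrightarrow>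
         0 \<le> inner (z - K (fst p)) (y - snd p) - \<rho> / 2 * (norm (y - snd p))\<^sup>2)"
    using nbhd by (auto simp: le_INF_iff zero_ereal_def)
  show ?thesis
  proof (rule partially_strongly_submonotoneI[where V = V])
    show "bounded_linear (diag_op \<phi> \<psi> \<circ> Xi_op \<gamma> \<rho> \<tau> \<sigma> K Ks)"
      by (simp add: comp_def bounded_linear_compose[OF bounded_linear_diag_op]
          bounded_linear_Xi_op[OF K Ks_bl])
    show "bounded_linear (\<lambda>u. 2 *\<^sub>R diag_op \<phi> \<psi> (diag_op \<tau> \<sigma> u))"
      by (intro bounded_linear_const_scaleR bounded_linear_compose[OF bounded_linear_diag_op]
          bounded_linear_diag_op)
    show "bounded_linear (Z2 \<circ> M2)"
      by (simp add: comp_def bounded_linear_compose[OF Z2 M2])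
    show "psd_op (Z2 \<circ> M2)" "0 \<in> Hop dG dFs K Ks uh" "open V" "uh \<in> V"
      by (fact ZM_psd uh V)+
    fix u w us
    assume "u \<in> V" "w \<in> Hop dG dFs K Ks u" "0 \<in> Hop dG dFs K Ks us"
    moreover obtain x y xs ys where u: "u = (x, y)" and us: "us = (xs, ys)" by fastforce
    ultimately obtain q z where "w = (q + Ks y, z - K x)"
      and gap_x: "0 \<le> inner (q + Ks ys) (x - xs) - \<gamma> / 2 * (norm (x - xs))\<^sup>2"
      and gap_y: "0 \<le> inner (z - K xs) (y - ys) - \<rho> / 2 * (norm (y - ys))\<^sup>2"
      using V_gap by (fastforce simp: Hop_def)
    moreover have "0 \<le> 2 * \<phi> * \<tau> * (inner (q + Ks ys) (x - xs) - \<gamma> / 2 * (norm (x - xs))\<^sup>2)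
        + 2 * \<psi> * \<sigma> * (inner (z - K xs) (y - ys) - \<rho> / 2 * (norm (y - ys))\<^sup>2)"
      using pos gap_x gap_y by simp
    ultimately show "inner ((diag_op \<phi> \<psi> \<circ> Xi_op \<gamma> \<rho> \<tau> \<sigma> K Ks) (u - us)) (u - us)
        \<le> winner (\<lambda>u. 2 *\<^sub>R diag_op \<phi> \<psi> (diag_op \<tau> \<sigma> u)) (w - 0) (u - us)"
      using saddle_gap_eq[OF bounded_linear.linear[OF K] bounded_linear.linear[OF Ks_bl],
          of \<phi> \<psi> \<tau> \<sigma> q y z x xs ys \<gamma> \<rho>] u us
      by simp
  qed
qed

end
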